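(* For every $0<c<1$ there exist a constant $K>0$ and infinitely many positive integers $k$ such that, for each such $k$, there is an instance with committee size $k$ and an exhaustive affordable committee $W$ satisfying EJR whose utilitarian ratio is at most $K/k^{1-c}$.
   Context: An instance $(A,C,k)$ consists of a finite nonempty candidate set $C$, voters $N=\{1,\dots,n\}$, approval sets $A_i\subseteq C$, and a committee size $1\le k\le|C|$. A committee is $W\subseteq C$ with $|W|\le k$; it is exhaustive if $|W|=k$. $\mathrm{sw}(W)=\sum_i|A_i\cap W|$; the utilitarian ratio is $\mathrm{sw}(W)/\max\{\mathrm{sw}(W'):|W'|=k\}$. $W$ is affordable if there are $p_i:C\to\mathbb{R}_{\ge0}$ with $p_i(c)=0$ for $c\notin A_i$, $\sum_c p_i(c)\le k/n$, $\sum_i p_i(c)=1$ for $c\in W$, $\sum_i p_i(c)=0$ for $c\notin W$. $W$ satisfies EJR if for every $\ell\in\{1,\dots,k\}$ and every group $N'\subseteq N$ with $|N'|\ge\ell n/k$ and $|\bigcap_{i\in N'}A_i|\ge\ell$, some $i\in N'$ has $|A_i\cap W|\ge\ell$. *)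

theory Defs
  imports Complex_Main
begin

(* Candidates are natural numbers; voters are N = {1..n};
   A i is the approval set of voter i. *)

definition is_instance :: "nat set \<Rightarrow> nat \<Rightarrow> (nat \<Rightarrow> nat set) \<Rightarrow> nat \<Rightarrow> bool" where
  "is_instance C n A k \<longleftrightarrow> finite C \<and> C \<noteq> {} \<and> n \<ge> 1 \<and>
     (\<forall>i\<in>{1..n}. A i \<subseteq> C) \<and> 1 \<le> k \<and> k \<le> card C"

definition is_committee :: "nat set \<Rightarrow> nat \<Rightarrow> nat set \<Rightarrow> bool" where
  "is_committee C k W \<longleftrightarrow> W \<subseteq> C \<and> card W \<le> k"

definition exhaustive :: "nat \<Rightarrow> nat set \<Rightarrow> bool" where
  "exhaustive k W \<longleftrightarrow> card W = k"

definition sw :: "nat \<Rightarrow> (nat \<Rightarrow> nat set) \<Rightarrow> nat set \<Rightarrow> nat" where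
  "sw n A W = (\<Sum>i\<in>{1..n}. card (A i \<inter> W))"

definition opt_sw :: "nat set \<Rightarrow> nat \<Rightarrow> (nat \<Rightarrow> nat set) \<Rightarrow> nat \<Rightarrow> nat" where
  "opt_sw C n A k = Max {sw n A W' | W'. W' \<subseteq> C \<and> card W' = k}"

definition util_ratio :: "nat set \<Rightarrow> nat \<Rightarrow> (nat \<Rightarrow> nat set) \<Rightarrow> nat \<Rightarrow> nat set \<Rightarrow> real" where
  "util_ratio C n A k W = real (sw n A W) / real (opt_sw C n A k)"

definition affordable :: "nat set \<Rightarrow> nat \<Rightarrow> (nat \<Rightarrow> nat set) \<Rightarrow> nat \<Rightarrow> nat set \<Rightarrow> bool" where
  "affordable C n A k W \<longleftrightarrow> (\<exists>p :: nat \<Rightarrow> nat \<Rightarrow> real.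
     (\<forall>i\<in>{1..n}. \<forall>c\<in>C. p i c \<ge> 0) \<and>
     (\<forall>i\<in>{1..n}. \<forall>c\<in>C. c \<notin> A i \<longrightarrow> p i c = 0) \<and>
     (\<forall>i\<in>{1..n}. (\<Sum>c\<in>C. p i c) \<le> real k / real n) \<and>
     (\<forall>c\<in>W. (\<Sum>i\<in>{1..n}. p i c) = 1) \<and>
     (\<forall>c\<in>C - W. (\<Sum>i\<in>{1..n}. p i c) = 0))"

definition EJR :: "nat \<Rightarrow> (nat \<Rightarrow> nat set) \<Rightarrow> nat \<Rightarrow> nat set \<Rightarrow> bool" where
  "EJR n A k W \<longleftrightarrow> (\<forall>l\<in>{1..k}. \<forall>N'. N' \<subseteq> {1..n} \<longrightarrow>
     real (card N') \<ge> real l * real n / real k \<longrightarrow>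
     card (\<Inter>i\<in>N'. A i) \<ge> l \<longrightarrow>
     (\<exists>i\<in>N'. card (A i \<inter> W) \<ge> l))"

end

theory Submission
  imports Defs "HOL-Library.FuncSet"
begin

text \<open>Let \<open>b = a t\<close>, \<open>s = b^a\<close> and \<open>k = b s = b^(a+1)\<close>.  Half of the \<open>2 k\<close> candidates form
  a grid of \<open>s\<close> rows of length \<open>b\<close>; the other half is the committee \<open>W\<close>, cut into \<open>m = t s\<close>
  blocks of \<open>a\<close> candidates.  For every function \<open>f\<close> from rows to columns and every block \<open>u\<close> one
  voter approves the graph of \<open>f\<close> together with block \<open>u\<close>.  Each voter approves \<open>a\<close> members of
  \<open>W\<close> but \<open>s\<close> grid cells, so the utilitarian ratio of \<open>W\<close> is at most \<open>a / s = a / (a t)^a\<close>,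
  which is \<open>O(1 / k^(1-c))\<close> as soon as \<open>c (a + 1) \<ge> 1\<close>.
  \<open>W\<close> is affordable since all its members have equally many supporters and all voters approve
  equally many of its members.  It satisfies EJR since a group that is cohesive beyond level
  \<open>a\<close> either shares a member of \<open>W\<close>, which confines it to one block and thus to \<open>n / m\<close> voters,
  or shares at least \<open>a + 1\<close> grid cells, which fixes the functions of its members on \<open>a + 1\<close>
  rows and leaves at most \<open>n / b^(a+1) = n / k\<close> voters.\<close>

lemma sw_le_opt_sw:
  assumes "finite C" "X \<subseteq> C" "card X = k"
  shows "sw n A X \<le> opt_sw C n A k"
proof -
  have "{sw n A W' | W'. W' \<subseteq> C \<and> card W' = k} \<subseteq> sw n A ` Pow C" by auto
  then have "finite {sw n A W' | W'. W' \<subseteq> C \<and> card W' = k}"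
    using assms(1) finite_subset by blast
  then show ?thesis
    unfolding opt_sw_def using assms(2,3) by (auto intro: Max_ge)
qed

lemma util_ratio_le_sw_ratio:
  assumes "finite C" "X \<subseteq> C" "card X = k" "0 < sw n A X"
  shows "util_ratio C n A k W \<le> real (sw n A W) / real (sw n A X)"
  unfolding util_ratio_def
  using sw_le_opt_sw[OF assms(1-3), of n A] assms(4) by (intro divide_left_mono) auto

text \<open>Every approver of a committee member pays the same share \<open>1/q\<close> for it.\<close>

lemma affordable_if_equal_support:
  assumes "finite C" "W \<subseteq> C" "q > 0"
    and support: "\<And>c. c \<in> W \<Longrightarrow> card {i\<in>{1..n}. c \<in> A i} = q"
    and budget: "\<And>i. i \<in> {1..n} \<Longrightarrow> real (card (A i \<inter> W)) \<le> real q * real k / real n"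
  shows "affordable C n A k W"
proof -
  define p where "p = (\<lambda>i c. if c \<in> W \<inter> A i then 1 / real q else 0)"
  have "(\<Sum>c\<in>C. p i c) \<le> real k / real n" if "i \<in> {1..n}" for i
  proof -
    have "C \<inter> {c. c \<in> W \<inter> A i} = A i \<inter> W" using assms(2) by auto
    then have "(\<Sum>c\<in>C. p i c) = real (card (A i \<inter> W)) / real q"
      unfolding p_def using assms(1) by (simp add: sum.If_cases)
    also have "\<dots> \<le> real k / real n"
      using budget[OF that] assms(3) by (simp add: divide_le_eq mult.commute)
    finally show ?thesis .
  qed
  moreover have "(\<Sum>i\<in>{1..n}. p i c) = 1" if "c \<in> W" for c
    using support[OF that] that assms(3) unfolding p_def by (simp add: sum.If_cases Int_def)
  ultimately show ?thesis
    unfolding affordable_def by (intro exI[of _ p]) (auto simp: p_def)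
qed

lemma EJR_if_cohesive_groups_small:
  assumes satisfied: "\<And>i. i \<in> {1..n} \<Longrightarrow> a \<le> card (A i \<inter> W)"
    and small: "\<And>N'. N' \<subseteq> {1..n} \<Longrightarrow> a < card (\<Inter>i\<in>N'. A i) \<Longrightarrow> card N' * k \<le> a * n"
  shows "EJR n A k W"
  unfolding EJR_def
proof (intro ballI allI impI)
  fix l N'
  assume l: "l \<in> {1..k}" and N': "N' \<subseteq> {1..n}"
    and large: "real l * real n / real k \<le> real (card N')"
    and cohesive: "l \<le> card (\<Inter>i\<in>N'. A i)"
  have "N' \<noteq> {}"
    using cohesive l by (auto simp: infinite_UNIV_nat)
  then obtain i0 where i0: "i0 \<in> N'" by blast
  show "\<exists>i\<in>N'. l \<le> card (A i \<inter> W)"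
  proof (cases "l \<le> a")
    case True
    moreover have "a \<le> card (A i0 \<inter> W)" using satisfied i0 N' by blast
    ultimately show ?thesis using i0 by (meson le_trans)
  next
    case False
    have "real (l * n) \<le> real (card N' * k)"
      using large l by (simp add: field_simps)
    then have "l * n \<le> a * n"
      using small[OF N'] cohesive False by linarith
    moreover have "n > 0" using i0 N' by auto
    ultimately show ?thesis using False by simp
  qed
qed

text \<open>The numbers below \<open>b * s\<close> form a grid of \<open>s\<close> rows of length \<open>b\<close>, cell \<open>x\<close> lying in
  row \<open>x div b\<close> and column \<open>x mod b\<close>; a function from rows to columns selects one cell per row.\<close>

definition graph_cells :: "nat \<Rightarrow> nat \<Rightarrow> (nat \<Rightarrow> nat) \<Rightarrow> nat set" where
  "graph_cells b s f = {x\<in>{0..<b*s}. f (x div b) = x mod b}"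

lemma graph_cells_subset: "graph_cells b s f \<subseteq> {0..<b*s}"
  unfolding graph_cells_def by auto

lemma graph_cells_eq_image:
  assumes "b > 0" "f \<in> {0..<s} \<rightarrow>\<^sub>E {0..<b}"
  shows "graph_cells b s f = (\<lambda>j. j*b + f j) ` {0..<s}"
proof
  show "graph_cells b s f \<subseteq> (\<lambda>j. j*b + f j) ` {0..<s}"
  proof
    fix x assume "x \<in> graph_cells b s f"
    then have "x div b < s" "f (x div b) = x mod b"
      unfolding graph_cells_def by (auto simp: less_mult_imp_div_less mult.commute)
    then show "x \<in> (\<lambda>j. j*b + f j) ` {0..<s}"
      by (intro image_eqI[of _ _ "x div b"]) auto
  qed
next
  show "(\<lambda>j. j*b + f j) ` {0..<s} \<subseteq> graph_cells b s f"
  proof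
    fix x assume "x \<in> (\<lambda>j. j*b + f j) ` {0..<s}"
    then obtain j where j: "j < s" "x = j*b + f j" by auto
    have "f j < b" using assms j by auto
    then have "x < (j+1)*b" using j by simp
    also have "\<dots> \<le> s*b" using j by (intro mult_right_mono) auto
    finally show "x \<in> graph_cells b s f"
      unfolding graph_cells_def using j \<open>f j < b\<close> by (auto simp: mult.commute)
  qed
qed

lemma card_graph_cells:
  assumes "b > 0" "f \<in> {0..<s} \<rightarrow>\<^sub>E {0..<b}"
  shows "card (graph_cells b s f) = s"
proof -
  have "inj_on (\<lambda>j. j*b + f j) {0..<s}"
  proof
    fix i j assume ij: "i \<in> {0..<s}" "j \<in> {0..<s}" and eq: "i*b + f i = j*b + f j"
    have "f i < b" "f j < b" using assms(2) ij by auto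
    then have "(i*b + f i) div b = i" "(j*b + f j) div b = j" by simp_all
    then show "i = j" using eq by metis
  qed
  then show ?thesis by (simp add: graph_cells_eq_image[OF assms] card_image)
qed

lemma inj_on_row_graph_cells: "inj_on (\<lambda>x. x div b) (graph_cells b s f)"
proof
  fix x y assume "x \<in> graph_cells b s f" "y \<in> graph_cells b s f" and row: "x div b = y div b"
  then have "x mod b = y mod b" unfolding graph_cells_def by auto
  with row show "x = y" by (metis div_mult_mod_eq)
qed

text \<open>A graph through the cells \<open>I\<close> is fixed on the \<open>card I\<close> rows they occupy.\<close>

lemma card_graphs_through:
  assumes "I \<subseteq> {0..<b*s}"
  shows "card {f\<in>{0..<s} \<rightarrow>\<^sub>E {0..<b}. I \<subseteq> graph_cells b s f} \<le> b ^ (s - card I)"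
    (is "card ?Q \<le> _")
proof (cases "?Q = {}")
  case False
  then obtain f0 where "f0 \<in> ?Q" by blast
  define J where "J = (\<lambda>x. x div b) ` I"
  have "inj_on (\<lambda>x. x div b) I"
    using \<open>f0 \<in> ?Q\<close> inj_on_subset[OF inj_on_row_graph_cells] by blast
  then have card_J: "card J = card I" unfolding J_def by (simp add: card_image)
  have J_rows: "J \<subseteq> {0..<s}"
    unfolding J_def using assms by (auto simp: less_mult_imp_div_less mult.commute)
  have fixed_on_J: "f j = f' j" if "f \<in> ?Q" "f' \<in> ?Q" "j \<in> J" for f f' j
  proof -
    obtain x where "x \<in> I" "j = x div b" using \<open>j \<in> J\<close> unfolding J_def by blast
    then have "f j = x mod b" "f' j = x mod b"
      using that(1,2) unfolding graph_cells_def by blast+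
    then show ?thesis by simp
  qed
  define r where "r f = restrict f ({0..<s} - J)" for f :: "nat \<Rightarrow> nat"
  have "inj_on r ?Q"
  proof
    fix f f' assume f: "f \<in> ?Q" and f': "f' \<in> ?Q" and "r f = r f'"
    have "f j = f' j" if "j \<in> {0..<s}" for j
    proof (cases "j \<in> J")
      case False
      then have "f j = r f j" "f' j = r f' j" using that unfolding r_def by simp_all
      then show ?thesis using \<open>r f = r f'\<close> by simp
    qed (rule fixed_on_J[OF f f'])
    moreover have "f \<in> {0..<s} \<rightarrow>\<^sub>E {0..<b}" "f' \<in> {0..<s} \<rightarrow>\<^sub>E {0..<b}"
      using f f' by simp_all
    ultimately show "f = f'" by (intro PiE_ext[of f "{0..<s}" "\<lambda>_. {0..<b}" f'])
  qed
  then have "card ?Q = card (r ` ?Q)" by (simp add: card_image)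
  also have "\<dots> \<le> card (({0..<s} - J) \<rightarrow>\<^sub>E {0..<b})"
    unfolding r_def by (intro card_mono finite_PiE) (auto simp: restrict_PiE_iff)
  also have "\<dots> = b ^ (s - card I)"
    using J_rows card_J by (simp add: card_funcsetE card_Diff_subset finite_subset)
  finally show ?thesis .
qed (metis card.empty zero_le)

locale EJR_low_welfare =
  fixes a t :: nat
  assumes a_pos: "0 < a" and t_pos: "0 < t"
begin

definition b :: nat where "b = a * t"
definition s :: nat where "s = b ^ a"
definition m :: nat where "m = t * s"
definition k :: nat where "k = a * m"

definition graphs :: "(nat \<Rightarrow> nat) set" where "graphs = {0..<s} \<rightarrow>\<^sub>E {0..<b}"
definition voter_types :: "((nat \<Rightarrow> nat) \<times> nat) set" where "voter_types = graphs \<times> {..<m}"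
definition n :: nat where "n = card voter_types"

definition block :: "nat \<Rightarrow> nat set" where "block u = {k + u*a..<k + u*a + a}"
definition approved :: "(nat \<Rightarrow> nat) \<times> nat \<Rightarrow> nat set" where
  "approved v = graph_cells b s (fst v) \<union> block (snd v)"

definition voter :: "nat \<Rightarrow> (nat \<Rightarrow> nat) \<times> nat" where
  "voter = (SOME g. bij_betw g {1..n} voter_types)"
definition A :: "nat \<Rightarrow> nat set" where "A i = approved (voter i)"

definition C :: "nat set" where "C = {0..<2*k}"
definition W :: "nat set" where "W = {k..<2*k}"

lemma b_pos: "0 < b" and s_pos: "0 < s" and m_pos: "0 < m"
  using a_pos t_pos by (simp_all add: b_def s_def m_def)

lemma k_eq_grid: "k = b * s"
  by (simp add: k_def m_def b_def)

lemma k_eq_power: "k = b ^ (a + 1)"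
  by (simp add: k_eq_grid s_def)

lemma card_graphs: "card graphs = b ^ s"
  by (simp add: graphs_def card_funcsetE)

lemma finite_voter_types: "finite voter_types"
  unfolding voter_types_def graphs_def by (intro finite_cartesian_product finite_PiE) auto

lemma n_eq: "n = b ^ s * m"
  by (simp add: n_def voter_types_def card_cartesian_product card_graphs)

lemma n_pos: "0 < n"
  using b_pos m_pos by (simp add: n_eq)

lemma bij_betw_voter: "bij_betw voter {1..n} voter_types"
  unfolding voter_def n_def by (rule someI_ex[OF ex_bij_betw_nat_finite_1[OF finite_voter_types]])

lemma voter_in_voter_types: "i \<in> {1..n} \<Longrightarrow> voter i \<in> voter_types"
  using bij_betwE[OF bij_betw_voter] by blast

lemma card_voters_with: "card {i\<in>{1..n}. P (voter i)} = card {v\<in>voter_types. P v}"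
  by (rule bij_betw_same_card[OF bij_betw_Collect[OF bij_betw_voter]]) simp

lemma mem_block_iff: "c \<in> block u \<longleftrightarrow> k \<le> c \<and> u = (c - k) div a"
proof
  assume "c \<in> block u"
  then have "k + a * u \<le> c" "c < k + a * u + a"
    unfolding block_def by (simp_all add: mult.commute)
  then have "k \<le> c" "a * u \<le> c - k" "c - k < a * Suc u"
    by (simp_all add: le_diff_conv2 less_diff_conv2)
  then show "k \<le> c \<and> u = (c - k) div a" using div_nat_eqI by simp
next
  assume c: "k \<le> c \<and> u = (c - k) div a"
  then have "u * a + (c - k) mod a = c - k" by simp
  moreover have "(c - k) mod a < a" using a_pos by simp
  ultimately show "c \<in> block u"
    unfolding block_def atLeastLessThan_iff using c by arith
qed

lemma block_subset_W: "u < m \<Longrightarrow> block u \<subseteq> W"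
proof -
  assume "u < m"
  then have "u * a + a \<le> m * a" using mult_le_mono1[of "u + 1" m a] by simp
  then show ?thesis unfolding block_def W_def k_def by (auto simp: mult.commute)
qed

lemma graph_cells_subset_grid: "graph_cells b s f \<subseteq> {0..<k}"
  using graph_cells_subset by (simp add: k_eq_grid)

lemma grid_Int_W: "{0..<k} \<inter> W = {}" and C_eq: "C = {0..<k} \<union> W"
  by (auto simp: C_def W_def)

lemma approved_Int_W: "v \<in> voter_types \<Longrightarrow> approved v \<inter> W = block (snd v)"
  using block_subset_W[of "snd v"] graph_cells_subset_grid[of "fst v"] grid_Int_W
  unfolding approved_def voter_types_def by (auto simp: mem_Times_iff)

lemma approved_Int_grid: "v \<in> voter_types \<Longrightarrow> approved v \<inter> {0..<k} = graph_cells b s (fst v)"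
  using block_subset_W[of "snd v"] graph_cells_subset_grid[of "fst v"] grid_Int_W
  unfolding approved_def voter_types_def by (auto simp: mem_Times_iff)

lemma approved_subset_C:
  assumes "v \<in> voter_types"
  shows "approved v \<subseteq> C"
proof -
  have "snd v < m" using assms by (auto simp: voter_types_def)
  then show ?thesis
    unfolding approved_def C_eq using block_subset_W graph_cells_subset_grid by blast
qed

lemma card_A_Int_W: "i \<in> {1..n} \<Longrightarrow> card (A i \<inter> W) = a"
  by (simp add: A_def approved_Int_W voter_in_voter_types block_def)

lemma card_A_Int_grid: "i \<in> {1..n} \<Longrightarrow> card (A i \<inter> {0..<k}) = s"
  using voter_in_voter_types[of i]
  by (simp add: A_def approved_Int_grid card_graph_cells[OF b_pos] voter_types_def graphs_def
      mem_Times_iff)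

lemma card_supporters_W:
  assumes "c \<in> W"
  shows "card {i\<in>{1..n}. c \<in> A i} = b ^ s"
proof -
  have "k \<le> c" "c - k < k" using assms unfolding W_def by auto
  then have "(c - k) div a < m"
    unfolding k_def by (intro less_mult_imp_div_less) (simp add: mult.commute)
  have "c \<in> approved v \<longleftrightarrow> snd v = (c - k) div a" if "v \<in> voter_types" for v
    using approved_Int_W[OF that] assms mem_block_iff[of c "snd v"] \<open>k \<le> c\<close> by blast
  then have "{v\<in>voter_types. c \<in> approved v} = {v\<in>voter_types. snd v = (c - k) div a}"
    by blast
  also have "\<dots> = graphs \<times> {(c - k) div a}"
    using \<open>(c - k) div a < m\<close> unfolding voter_types_def by auto
  finally have "card {v\<in>voter_types. c \<in> approved v} = b ^ s"
    by (simp add: card_cartesian_product card_graphs)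
  then show ?thesis
    unfolding A_def using card_voters_with[of "\<lambda>v. c \<in> approved v"] by simp
qed

lemma card_supporters_grid:
  assumes "I \<subseteq> {0..<k}"
  shows "card {i\<in>{1..n}. I \<subseteq> A i} \<le> b ^ (s - card I) * m"
proof -
  have "I \<subseteq> approved v \<longleftrightarrow> I \<subseteq> graph_cells b s (fst v)" if "v \<in> voter_types" for v
    using approved_Int_grid[OF that] assms by blast
  then have "{v\<in>voter_types. I \<subseteq> approved v} = {v\<in>voter_types. I \<subseteq> graph_cells b s (fst v)}"
    by blast
  also have "\<dots> = {f\<in>{0..<s} \<rightarrow>\<^sub>E {0..<b}. I \<subseteq> graph_cells b s f} \<times> {..<m}"
    by (auto simp: voter_types_def graphs_def)
  finally have "card {v\<in>voter_types. I \<subseteq> approved v}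
      = card {f\<in>{0..<s} \<rightarrow>\<^sub>E {0..<b}. I \<subseteq> graph_cells b s f} * m"
    by (simp add: card_cartesian_product)
  then have "card {i\<in>{1..n}. I \<subseteq> A i}
      = card {f\<in>{0..<s} \<rightarrow>\<^sub>E {0..<b}. I \<subseteq> graph_cells b s f} * m"
    unfolding A_def using card_voters_with[of "\<lambda>v. I \<subseteq> approved v"] by simp
  also have "\<dots> \<le> b ^ (s - card I) * m"
    using card_graphs_through[of I b s] assms by (simp add: k_eq_grid)
  finally show ?thesis .
qed

lemma valid_instance: "is_instance C n A k"
  using approved_subset_C voter_in_voter_types b_pos m_pos
  by (auto simp: is_instance_def A_def C_def n_eq k_eq_power)

lemma W_committee: "is_committee C k W" and W_exhaustive: "exhaustive k W"
  by (auto simp: is_committee_def exhaustive_def C_def W_def)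

lemma W_affordable: "affordable C n A k W"
proof (rule affordable_if_equal_support[where q = "b ^ s"])
  show "finite C" "W \<subseteq> C" by (auto simp: C_def W_def)
  show "0 < b ^ s" using b_pos by simp
  show "card {i\<in>{1..n}. c \<in> A i} = b ^ s" if "c \<in> W" for c
    using that by (rule card_supporters_W)
  have "real (b ^ s) * real k / real n = real a"
    using b_pos m_pos by (simp add: n_eq k_def field_simps)
  then show "real (card (A i \<inter> W)) \<le> real (b ^ s) * real k / real n" if "i \<in> {1..n}" for i
    using card_A_Int_W[OF that] by simp
qed

lemma card_cohesive_group:
  assumes N': "N' \<subseteq> {1..n}" and cohesive: "a < card (\<Inter>i\<in>N'. A i)"
  shows "card N' * k \<le> a * n"
proof -
  define I where "I = (\<Inter>i\<in>N'. A i)"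
  have "N' \<noteq> {}" using cohesive by (auto simp: infinite_UNIV_nat)
  then obtain i0 where "i0 \<in> N'" by blast
  then have i0: "i0 \<in> {1..n}" "I \<subseteq> A i0" using N' unfolding I_def by auto
  have supporters: "N' \<subseteq> {i\<in>{1..n}. I \<subseteq> A i}" using N' unfolding I_def by blast
  show ?thesis
  proof (cases "I \<inter> W = {}")
    case False
    then obtain c where "c \<in> W" "N' \<subseteq> {i\<in>{1..n}. c \<in> A i}" using supporters by blast
    then have "card N' \<le> card {i\<in>{1..n}. c \<in> A i}" by (intro card_mono) auto
    then have "card N' * k \<le> b ^ s * (a * m)"
      using card_supporters_W[OF \<open>c \<in> W\<close>] by (simp add: k_def)
    then show ?thesis by (simp add: n_eq algebra_simps)
  next
    case True
    then have grid: "I \<subseteq> {0..<k}"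
      using i0 approved_subset_C[OF voter_in_voter_types] C_eq unfolding A_def by blast
    then have "card I \<le> card (A i0 \<inter> {0..<k})"
      using i0 by (intro card_mono) auto
    then have "card I \<le> s" using card_A_Int_grid[OF i0(1)] by simp
    have "card N' \<le> card {i\<in>{1..n}. I \<subseteq> A i}"
      using supporters by (intro card_mono) auto
    then have "card N' \<le> b ^ (s - card I) * m"
      using card_supporters_grid[OF grid] by simp
    then have "card N' * k \<le> b ^ (s - card I) * m * b ^ card I"
      unfolding k_eq_power using cohesive b_pos
      by (intro mult_le_mono power_increasing) (auto simp: I_def)
    also have "\<dots> = n" using \<open>card I \<le> s\<close> by (simp add: n_eq flip: power_add)
    also have "\<dots> \<le> a * n" using a_pos by simp
    finally show ?thesis .
  qed
qed

lemma W_EJR: "EJR n A k W"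
  using card_A_Int_W card_cohesive_group by (intro EJR_if_cohesive_groups_small[where a = a]) auto

lemma sw_grid: "sw n A {0..<k} = n * s"
  unfolding sw_def using card_A_Int_grid by simp

lemma opt_sw_pos: "0 < opt_sw C n A k"
proof -
  have "sw n A {0..<k} \<le> opt_sw C n A k"
    by (rule sw_le_opt_sw) (auto simp: C_def)
  then show ?thesis using n_pos s_pos sw_grid by (metis nat_0_less_mult_iff order_less_le_trans)
qed

lemma sw_W: "sw n A W = n * a"
  unfolding sw_def using card_A_Int_W by simp

lemma util_ratio_W: "util_ratio C n A k W \<le> real a / real s"
proof -
  have "util_ratio C n A k W \<le> real (sw n A W) / real (sw n A {0..<k})"
    by (rule util_ratio_le_sw_ratio) (auto simp: C_def sw_grid n_pos s_pos)
  also have "\<dots> = real a / real s"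
    using n_pos by (simp add: sw_W sw_grid)
  finally show ?thesis .
qed

end

lemma EJR_low_welfare_instance:
  fixes a t :: nat
  assumes "0 < a" "0 < t"
  shows "\<exists>C n A W. is_instance C n A ((a*t)^(a+1)) \<and> is_committee C ((a*t)^(a+1)) W \<and>
    exhaustive ((a*t)^(a+1)) W \<and> affordable C n A ((a*t)^(a+1)) W \<and> EJR n A ((a*t)^(a+1)) W \<and>
    opt_sw C n A ((a*t)^(a+1)) > 0 \<and> util_ratio C n A ((a*t)^(a+1)) W \<le> real a / real ((a*t)^a)"
proof -
  interpret EJR_low_welfare a t using assms by unfold_locales
  have "(a*t)^(a+1) = k" "(a*t)^a = s" by (simp_all add: k_eq_power b_def s_def)
  then show ?thesis
    using valid_instance W_committee W_exhaustive W_affordable W_EJR opt_sw_pos util_ratio_W by metis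
qed

lemma divide_power_le_divide_powr:
  fixes b a :: nat and c x :: real
  assumes "0 < b" and "1 \<le> c * (real a + 1)" and "0 \<le> x"
  shows "x / real (b^a) \<le> x / real (b^(a+1)) powr (1 - c)"
proof -
  have "real (b^(a+1)) powr (1 - c) = (real b powr real (a+1)) powr (1 - c)"
    using assms(1) by (simp only: of_nat_power powr_realpow of_nat_0_less_iff)
  also have "\<dots> = real b powr (real (a+1) * (1 - c))"
    by (rule powr_powr)
  also have "\<dots> \<le> real b powr real a"
    using assms(1,2) by (intro powr_mono) (auto simp: algebra_simps)
  also have "\<dots> = real (b^a)" using assms(1) by (simp add: powr_realpow)
  finally show ?thesis
    using assms(1,3) by (intro divide_left_mono mult_pos_pos) auto
qed

theorem theorem2:
  fixes c :: real
  assumes "0 < c" and "c < 1"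
  shows "\<exists>K :: real. K > 0 \<and>
    infinite {k :: nat. k > 0 \<and>
      (\<exists>C n A W. is_instance C n A k \<and> is_committee C k W \<and> exhaustive k W \<and>
         affordable C n A k W \<and> EJR n A k W \<and>
         opt_sw C n A k > 0 \<and>
         util_ratio C n A k W \<le> K / real k powr (1 - c))}"
    (is "\<exists>K. K > 0 \<and> infinite (?good K)")
proof -
  define a where "a = nat \<lceil>1/c\<rceil>"
  have "1 / c \<le> real a"
    unfolding a_def by (rule real_nat_ceiling_ge)
  then have "1 \<le> c * real a"
    using assms(1) by (simp add: divide_le_eq mult.commute)
  then have "0 < a" and ca: "1 \<le> c * (real a + 1)"
    using assms by (auto simp: algebra_simps intro: Nat.gr0I)
  define k where "k t = (a * Suc t)^(a+1)" for t
  have "k t \<in> ?good (real a)" for t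
    using EJR_low_welfare_instance[OF \<open>0 < a\<close>, of "Suc t"] \<open>0 < a\<close>
      divide_power_le_divide_powr[of "a * Suc t" c a "real a", OF _ ca]
    unfolding k_def by (fastforce intro: order_trans)
  then have "range k \<subseteq> ?good (real a)" by blast
  moreover have "inj k"
  proof
    fix x y assume "k x = k y"
    then have "a * Suc x = a * Suc y" unfolding k_def by (rule power_eq_imp_eq_base) simp_all
    then show "x = y" using \<open>0 < a\<close> by simp
  qed
  then have "infinite (range k)" using finite_imageD infinite_UNIV_nat by blast
  ultimately have "infinite (?good (real a))" by (rule infinite_super)
  moreover have "real a > 0" using \<open>0 < a\<close> by simp
  ultimately show ?thesis by blast
qed

end
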